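(* Let $Q$ be a quantity space over a field $K$ with a basis $E=\{e_1,\ldots,e_n\}$. Then: (1) $\mu_E(xy)=\mu_E(x)\mu_E(y)$ for all $x,y\in Q$; (2) for all $x\in Q$ with $\mu_E(x)\neq0$, $x^{-1}$ exists and $\mu_E(x^{-1})=\mu_E(x)^{-1}$; (3) $\mu_E(\lambda\cdot x)=\lambda\,\mu_E(x)$ for all $\lambda\in K$, $x\in Q$; (4) $\mu_E(x+y)=\mu_E(x)+\mu_E(y)$ for all $x,y\in Q$ with $x\sim y$.
   Context: A scalable monoid over a (unital, associative) ring $R$ is a monoid $X$ (identity $1_X$, product written $xy$) together with a map $R\times X\to X$, $(\alpha,x)\mapsto\alpha\cdot x$, such that $1\cdot x=x$, $\alpha\cdot(\beta\cdot x)=\alpha\beta\cdot x$ and $\alpha\cdot(xy)=(\alpha\cdot x)y=x(\alpha\cdot y)$. A quantity space over a field $K$ is a commutative scalable monoid $Q$ over $K$ for which there exists a basis, i.e. a finite set $\{e_1,\ldots,e_n\}$ of invertible elements of $Q$ such that every $x\in Q$ has a unique expansion $x=\mu\cdot\prod_{i=1}^n e_i^{k_i}$ with $\mu\in K$ and $k_i\in\mathbb{Z}$; the scalar $\mu$ in this expansion is the measure $\mu_E(x)$ of $x$ relative to $E$. On $Q$, $x\sim y$ iff $\alpha\cdot x=\beta\cdot y$ for some $\alpha,\beta\in K$. A unit element for a class $\mathsf{C}$ of $\sim$ is some $u\in\mathsf{C}$ such that every $x\in\mathsf{C}$ equals $\lambda\cdot u$ for some $\lambda\in K$ and $\lambda\cdot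 u=\lambda'\cdot u$ implies $\lambda=\lambda'$. For $x\sim y$, with $u$ a unit element for their class, $x=\rho\cdot u$, $y=\sigma\cdot u$, the sum is $x+y:=(\rho+\sigma)\cdot u$ (independent of $u$). *)

theory Defs
  imports Main
begin

definition scalable_monoid ::
  "('q \<Rightarrow> 'q \<Rightarrow> 'q) \<Rightarrow> 'q \<Rightarrow> ('k::ring_1 \<Rightarrow> 'q \<Rightarrow> 'q) \<Rightarrow> bool" where
  "scalable_monoid mult one smult \<longleftrightarrow>
     (\<forall>x y z. mult (mult x y) z = mult x (mult y z)) \<and>
     (\<forall>x. mult one x = x) \<and> (\<forall>x. mult x one = x) \<and>
     (\<forall>x. smult 1 x = x) \<and>
     (\<forall>a b x. smult a (smult b x) = smult (a * b) x) \<and>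
     (\<forall>a x y. smult a (mult x y) = mult (smult a x) y \<and>
              smult a (mult x y) = mult x (smult a y))"

definition q_invertible :: "('q \<Rightarrow> 'q \<Rightarrow> 'q) \<Rightarrow> 'q \<Rightarrow> 'q \<Rightarrow> bool" where
  "q_invertible mult one x \<longleftrightarrow> (\<exists>y. mult x y = one \<and> mult y x = one)"

definition q_inv :: "('q \<Rightarrow> 'q \<Rightarrow> 'q) \<Rightarrow> 'q \<Rightarrow> 'q \<Rightarrow> 'q" where
  "q_inv mult one x = (THE y. mult x y = one \<and> mult y x = one)"

definition q_pow :: "('q \<Rightarrow> 'q \<Rightarrow> 'q) \<Rightarrow> 'q \<Rightarrow> 'q \<Rightarrow> nat \<Rightarrow> 'q" where
  "q_pow mult one x n = ((mult x) ^^ n) one"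

text \<open>Integer powers (meaningful for invertible elements).\<close>
definition q_zpow :: "('q \<Rightarrow> 'q \<Rightarrow> 'q) \<Rightarrow> 'q \<Rightarrow> 'q \<Rightarrow> int \<Rightarrow> 'q" where
  "q_zpow mult one x k =
     (if 0 \<le> k then q_pow mult one x (nat k)
      else q_pow mult one (q_inv mult one x) (nat (- k)))"

definition q_monomial :: "('q \<Rightarrow> 'q \<Rightarrow> 'q) \<Rightarrow> 'q \<Rightarrow> 'q list \<Rightarrow> int list \<Rightarrow> 'q" where
  "q_monomial mult one es ks =
     foldr (\<lambda>(e, k) acc. mult (q_zpow mult one e k) acc) (zip es ks) one"

definition is_basis ::
  "('q \<Rightarrow> 'q \<Rightarrow> 'q) \<Rightarrow> 'q \<Rightarrow> ('k \<Rightarrow> 'q \<Rightarrow> 'q) \<Rightarrow> 'q list \<Rightarrow> bool" where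
  "is_basis mult one smult es \<longleftrightarrow>
     distinct es \<and> (\<forall>e\<in>set es. q_invertible mult one e) \<and>
     (\<forall>x. \<exists>!(mu, ks). length ks = length es \<and>
             x = smult mu (q_monomial mult one es ks))"

definition quantity_space ::
  "('q \<Rightarrow> 'q \<Rightarrow> 'q) \<Rightarrow> 'q \<Rightarrow> ('k::field \<Rightarrow> 'q \<Rightarrow> 'q) \<Rightarrow> bool" where
  "quantity_space mult one smult \<longleftrightarrow>
     scalable_monoid mult one smult \<and> (\<forall>x y. mult x y = mult y x) \<and>
     (\<exists>es. is_basis mult one smult es)"

definition q_measure ::
  "('q \<Rightarrow> 'q \<Rightarrow> 'q) \<Rightarrow> 'q \<Rightarrow> ('k \<Rightarrow> 'q \<Rightarrow> 'q) \<Rightarrow> 'q list \<Rightarrow> 'q \<Rightarrow> 'k" where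
  "q_measure mult one smult es x =
     (THE mu. \<exists>ks. length ks = length es \<and> x = smult mu (q_monomial mult one es ks))"

definition q_sim :: "('k \<Rightarrow> 'q \<Rightarrow> 'q) \<Rightarrow> 'q \<Rightarrow> 'q \<Rightarrow> bool" where
  "q_sim smult x y \<longleftrightarrow> (\<exists>a b. smult a x = smult b y)"

definition unit_element :: "('k \<Rightarrow> 'q \<Rightarrow> 'q) \<Rightarrow> 'q set \<Rightarrow> 'q \<Rightarrow> bool" where
  "unit_element smult C u \<longleftrightarrow>
     u \<in> C \<and> (\<forall>x\<in>C. \<exists>l. x = smult l u) \<and>
     (\<forall>l l'. smult l u = smult l' u \<longrightarrow> l = l')"

definition q_add :: "('k::ring_1 \<Rightarrow> 'q \<Rightarrow> 'q) \<Rightarrow> 'q \<Rightarrow> 'q \<Rightarrow> 'q" where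
  "q_add smult x y =
     (THE z. \<exists>u r s. unit_element smult {w. q_sim smult x w} u \<and>
                    x = smult r u \<and> y = smult s u \<and> z = smult (r + s) u)"

end

theory Submission
  imports Defs
begin

text \<open>Every \<open>x\<close> has a unique expansion \<open>x = \<mu>\<cdot>e^k\<close> with \<open>k\<close> an exponent vector.
  By commutativity and the exponent laws, \<open>(\<mu>\<cdot>e^k)(\<nu>\<cdot>e^l) = (\<mu>\<nu>)\<cdot>e^(k+l)\<close>, so the
  measure is multiplicative, and \<open>(1/\<mu>)\<cdot>e^(-k)\<close> inverts \<open>x\<close> when \<open>\<mu> \<noteq> 0\<close>. Uniqueness
  of expansions gives \<open>\<mu>\<cdot>e^k \<sim> \<nu>\<cdot>e^l\<close> iff \<open>k = l\<close>; then \<open>e^k\<close> is a unit element of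
  the common class, so the sum is \<open>(\<mu> + \<nu>)\<cdot>e^k\<close>.\<close>

locale mult_monoid =
  fixes mult :: "'q \<Rightarrow> 'q \<Rightarrow> 'q" and one :: 'q
  assumes mult_assoc: "mult (mult x y) z = mult x (mult y z)"
    and mult_one_left: "mult one x = x"
    and mult_one_right: "mult x one = x"
begin

lemma right_inverse_eq_left_inverse:
  assumes "mult y x = one" and "mult x z = one"
  shows "z = y"
proof -
  have "z = mult (mult y x) z" using assms(1) by (simp add: mult_one_left)
  also have "\<dots> = y" using assms(2) by (simp add: mult_assoc mult_one_right)
  finally show ?thesis .
qed

lemma q_inv_eqI:
  assumes "mult x y = one" and "mult y x = one"
  shows "q_inv mult one x = y"
  unfolding q_inv_def
  by (rule the_equality) (use assms right_inverse_eq_left_inverse in auto)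

lemma q_pow_0 [simp]: "q_pow mult one x 0 = one"
  by (simp add: q_pow_def)

lemma q_pow_Suc: "q_pow mult one x (Suc n) = mult x (q_pow mult one x n)"
  by (simp add: q_pow_def)

lemma q_zpow_0 [simp]: "q_zpow mult one x 0 = one"
  by (simp add: q_zpow_def)

lemma q_zpow_add_one:
  assumes "mult e i = one" and "mult i e = one"
  shows "q_zpow mult one e (k + 1) = mult e (q_zpow mult one e k)"
proof -
  have inv_e: "q_inv mult one e = i" using q_inv_eqI assms by blast
  consider "k \<ge> 0" | "k = -1" | "k < -1" by linarith
  then show ?thesis
  proof cases
    case 1
    then have "nat (k + 1) = Suc (nat k)" by simp
    with 1 show ?thesis by (simp add: q_zpow_def q_pow_Suc)
  next
    case 2
    then show ?thesis using assms inv_e by (simp add: q_zpow_def q_pow_Suc mult_one_right)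
  next
    case 3
    then have "nat (- k) = Suc (nat (- (k + 1)))" by simp
    with 3 have "q_zpow mult one e k = mult i (q_zpow mult one e (k + 1))"
      using inv_e by (simp add: q_zpow_def q_pow_Suc)
    then show ?thesis using assms by (simp add: mult_assoc[symmetric] mult_one_left)
  qed
qed

lemma q_zpow_add:
  assumes "q_invertible mult one e"
  shows "mult (q_zpow mult one e k) (q_zpow mult one e l) = q_zpow mult one e (k + l)"
proof -
  obtain i where ei: "mult e i = one" "mult i e = one"
    using assms unfolding q_invertible_def by blast
  note up = q_zpow_add_one[OF ei]
  have down: "q_zpow mult one e (j - 1) = mult i (q_zpow mult one e j)" for j
    using up[of "j - 1"] ei by (simp add: mult_assoc[symmetric] mult_one_left)
  show ?thesis
  proof (induction k rule: int_induct[where k = 0])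
    case base
    then show ?case by (simp add: mult_one_left)
  next
    case (step1 j)
    have "mult (q_zpow mult one e (j + 1)) (q_zpow mult one e l) = mult e (q_zpow mult one e (j + l))"
      using step1.IH by (simp add: up mult_assoc)
    also have "\<dots> = q_zpow mult one e (j + 1 + l)"
      using up[of "j + l"] by (simp add: add.commute add.left_commute)
    finally show ?case .
  next
    case (step2 j)
    have "mult (q_zpow mult one e (j - 1)) (q_zpow mult one e l) = mult i (q_zpow mult one e (j + l))"
      using step2.IH by (simp add: down mult_assoc)
    also have "\<dots> = q_zpow mult one e (j - 1 + l)"
      using down[of "j + l"] by (simp add: algebra_simps)
    finally show ?case .
  qed
qed

lemma q_monomial_Nil [simp]: "q_monomial mult one [] ks = one"
  by (simp add: q_monomial_def)

lemma q_monomial_Cons [simp]: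
  "q_monomial mult one (e # es) (k # ks) = mult (q_zpow mult one e k) (q_monomial mult one es ks)"
  by (simp add: q_monomial_def)

lemma q_monomial_zeros: "q_monomial mult one es (replicate (length es) 0) = one"
  by (induction es) (simp_all add: mult_one_left)

end

locale comm_mult_monoid = mult_monoid +
  assumes mult_commute: "mult x y = mult y x"
begin

lemma mult_mult_swap: "mult (mult a b) (mult c d) = mult (mult a c) (mult b d)"
  by (metis mult_assoc mult_commute)

lemma q_monomial_mult:
  assumes "\<forall>e\<in>set es. q_invertible mult one e"
    and "length ks = length es" and "length ls = length es"
  shows "mult (q_monomial mult one es ks) (q_monomial mult one es ls)
           = q_monomial mult one es (map2 (+) ks ls)"
  using assms
proof (induction es arbitrary: ks ls)
  case Nil
  then show ?case by (simp add: mult_one_left)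
next
  case (Cons e es)
  then obtain k ks' l ls' where ks: "ks = k # ks'" "length ks' = length es"
    and ls: "ls = l # ls'" "length ls' = length es"
    by (metis length_Suc_conv)
  have "mult (q_monomial mult one (e # es) ks) (q_monomial mult one (e # es) ls)
      = mult (mult (q_zpow mult one e k) (q_zpow mult one e l))
             (mult (q_monomial mult one es ks') (q_monomial mult one es ls'))"
    by (simp add: ks ls mult_mult_swap)
  also have "\<dots> = q_monomial mult one (e # es) (map2 (+) ks ls)"
    using Cons ks ls by (simp add: q_zpow_add)
  finally show ?case .
qed

end

locale scalable_mult_monoid = mult_monoid mult one
  for mult :: "'q \<Rightarrow> 'q \<Rightarrow> 'q" and one :: 'q +
  fixes smult :: "'k::ring_1 \<Rightarrow> 'q \<Rightarrow> 'q"
  assumes smult_one: "smult 1 x = x"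
    and smult_smult: "smult a (smult b x) = smult (a * b) x"
    and smult_mult_left: "smult a (mult x y) = mult (smult a x) y"
    and smult_mult_right: "smult a (mult x y) = mult x (smult a y)"
begin

lemma mult_smult_smult: "mult (smult a x) (smult b y) = smult (a * b) (mult x y)"
  by (metis smult_smult smult_mult_left smult_mult_right)

lemma q_add_eqI:
  assumes "unit_element smult {w. q_sim smult x w} u"
    and "x = smult a u" and "y = smult b u"
  shows "q_add smult x y = smult (a + b) u"
  unfolding q_add_def
proof (rule the_equality)
  show "\<exists>u' r s. unit_element smult {w. q_sim smult x w} u' \<and>
          x = smult r u' \<and> y = smult s u' \<and> smult (a + b) u = smult (r + s) u'"
    using assms by blast
next
  fix z
  assume "\<exists>u' r s. unit_element smult {w. q_sim smult x w} u' \<and>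
            x = smult r u' \<and> y = smult s u' \<and> z = smult (r + s) u'"
  then obtain u' r s where u': "unit_element smult {w. q_sim smult x w} u'"
    and x: "x = smult r u'" and y: "y = smult s u'" and z: "z = smult (r + s) u'"
    by blast
  have scalar_unique: "smult l u = smult l' u \<Longrightarrow> l = l'" for l l'
    using assms(1) unfolding unit_element_def by blast
  from u' obtain c where c: "u' = smult c u"
    using assms(1) unfolding unit_element_def by blast
  have "a = r * c" using assms(2) x c by (auto simp: smult_smult intro: scalar_unique)
  moreover have "b = s * c" using assms(3) y c by (auto simp: smult_smult intro: scalar_unique)
  ultimately show "z = smult (a + b) u" using z c by (simp add: smult_smult distrib_right)
qed

end

locale quantity_space_basis =
  comm_mult_monoid mult one + scalable_mult_monoid mult one smult
  for mult :: "'q \<Rightarrow> 'q \<Rightarrow> 'q" and one :: 'q and smult :: "'k::field \<Rightarrow> 'q \<Rightarrow> 'q" +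
  fixes es :: "'q list"
  assumes basis: "is_basis mult one smult es"
begin

abbreviation monomial :: "int list \<Rightarrow> 'q" where
  "monomial \<equiv> q_monomial mult one es"

abbreviation \<mu> :: "'q \<Rightarrow> 'k" where
  "\<mu> \<equiv> q_measure mult one smult es"

lemma basis_invertible: "\<forall>e\<in>set es. q_invertible mult one e"
  using basis unfolding is_basis_def by blast

lemma basis_expansion_exists:
  obtains mu ks where "length ks = length es" and "x = smult mu (monomial ks)"
  using basis unfolding is_basis_def by blast

lemma basis_expansion_unique:
  assumes "length ks = length es" and "length ls = length es"
    and "smult a (monomial ks) = smult b (monomial ls)"
  shows "a = b" and "ks = ls"
proof -
  let ?P = "\<lambda>(mu, ks'). length ks' = length es \<and> smult a (monomial ks) = smult mu (monomial ks')"
  have "\<exists>!p. ?P p"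
    using basis unfolding is_basis_def by blast
  moreover have "?P (a, ks)" and "?P (b, ls)"
    using assms by simp_all
  ultimately have "(a, ks) = (b, ls)"
    by (metis (no_types, lifting))
  then show "a = b" and "ks = ls" by simp_all
qed

lemma q_measure_expansion:
  assumes "length ks = length es"
  shows "\<mu> (smult mu (monomial ks)) = mu"
  unfolding q_measure_def
  by (rule the_equality) (use assms basis_expansion_unique in blast)+

lemma q_sim_expansion_iff:
  assumes "length ks = length es" and "length ls = length es"
  shows "q_sim smult (smult a (monomial ks)) (smult b (monomial ls)) \<longleftrightarrow> ks = ls"
proof
  assume "q_sim smult (smult a (monomial ks)) (smult b (monomial ls))"
  then obtain c d where "smult (c * a) (monomial ks) = smult (d * b) (monomial ls)"
    unfolding q_sim_def by (auto simp: smult_smult)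
  then show "ks = ls" using basis_expansion_unique assms by blast
next
  assume "ks = ls"
  then have "smult 0 (smult a (monomial ks)) = smult 0 (smult b (monomial ls))"
    by (simp add: smult_smult)
  then show "q_sim smult (smult a (monomial ks)) (smult b (monomial ls))"
    unfolding q_sim_def by blast
qed

lemma monomial_unit_element:
  assumes "length ks = length es"
  shows "unit_element smult {w. q_sim smult (smult a (monomial ks)) w} (monomial ks)"
proof -
  have sim_class_iff: "q_sim smult (smult a (monomial ks)) w \<longleftrightarrow> (\<exists>c. w = smult c (monomial ks))" for w
  proof -
    obtain c ls where ls: "length ls = length es" and w: "w = smult c (monomial ls)"
      by (rule basis_expansion_exists)
    have "(\<exists>c'. smult c (monomial ls) = smult c' (monomial ks)) \<longleftrightarrow> ls = ks"
      using assms ls basis_expansion_unique(2) by blast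
    then show ?thesis
      using assms ls q_sim_expansion_iff by (auto simp: w)
  qed
  have "monomial ks = smult 1 (monomial ks)" by (simp add: smult_one)
  then show ?thesis
    unfolding unit_element_def
    using sim_class_iff basis_expansion_unique(1)[OF assms assms] by auto
qed

lemma q_measure_mult: "\<mu> (mult x y) = \<mu> x * \<mu> y"
proof -
  obtain a ks where ks: "length ks = length es" and x: "x = smult a (monomial ks)"
    by (rule basis_expansion_exists)
  obtain b ls where ls: "length ls = length es" and y: "y = smult b (monomial ls)"
    by (rule basis_expansion_exists)
  have "mult x y = smult (a * b) (monomial (map2 (+) ks ls))"
    using ks ls by (simp add: x y mult_smult_smult q_monomial_mult basis_invertible)
  then show ?thesis
    using ks ls by (simp add: x y q_measure_expansion)
qed

lemma q_measure_inverse: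
  assumes "\<mu> x \<noteq> 0"
  shows "q_invertible mult one x \<and> \<mu> (q_inv mult one x) = inverse (\<mu> x)"
proof -
  obtain a ks where ks: "length ks = length es" and x: "x = smult a (monomial ks)"
    by (rule basis_expansion_exists)
  have "a \<noteq> 0" using assms ks by (simp add: x q_measure_expansion)
  define y where "y = smult (inverse a) (monomial (map uminus ks))"
  have "map2 (+) ks (map uminus ks) = replicate (length es) 0"
    unfolding ks[symmetric] by (induction ks) auto
  then have xy: "mult x y = one"
    using \<open>a \<noteq> 0\<close> ks
    by (simp add: x y_def mult_smult_smult q_monomial_mult basis_invertible
        q_monomial_zeros smult_one)
  then have yx: "mult y x = one" by (simp add: mult_commute)
  have "q_inv mult one x = y" using q_inv_eqI xy yx .
  moreover have "q_invertible mult one x" using xy yx unfolding q_invertible_def by blast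
  ultimately show ?thesis using ks by (simp add: x y_def q_measure_expansion)
qed

lemma q_measure_smult: "\<mu> (smult l x) = l * \<mu> x"
proof -
  obtain a ks where "length ks = length es" and "x = smult a (monomial ks)"
    by (rule basis_expansion_exists)
  then show ?thesis by (simp add: smult_smult q_measure_expansion)
qed

lemma q_measure_add:
  assumes "q_sim smult x y"
  shows "\<mu> (q_add smult x y) = \<mu> x + \<mu> y"
proof -
  obtain a ks where ks: "length ks = length es" and x: "x = smult a (monomial ks)"
    by (rule basis_expansion_exists)
  obtain b ls where ls: "length ls = length es" and y: "y = smult b (monomial ls)"
    by (rule basis_expansion_exists)
  have "ls = ks" using assms ks ls q_sim_expansion_iff by (simp add: x y)
  then have "q_add smult x y = smult (a + b) (monomial ks)"
    using monomial_unit_element[OF ks] by (intro q_add_eqI) (simp_all add: x y)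
  then show ?thesis using ks ls by (simp add: x y q_measure_expansion)
qed

end

theorem proposition3p14:
  fixes mult :: "'q \<Rightarrow> 'q \<Rightarrow> 'q" and one :: 'q and smult :: "'k::field \<Rightarrow> 'q \<Rightarrow> 'q"
    and es :: "'q list"
  assumes "quantity_space mult one smult"
    and "is_basis mult one smult es"
  shows "(\<forall>x y. q_measure mult one smult es (mult x y) =
                q_measure mult one smult es x * q_measure mult one smult es y)
       \<and> (\<forall>x. q_measure mult one smult es x \<noteq> 0 \<longrightarrow>
                q_invertible mult one x \<and>
                q_measure mult one smult es (q_inv mult one x) =
                  inverse (q_measure mult one smult es x))
       \<and> (\<forall>l x. q_measure mult one smult es (smult l x) =
                l * q_measure mult one smult es x)
       \<and> (\<forall>x y. q_sim smult x y \<longrightarrow>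
                q_measure mult one smult es (q_add smult x y) =
                  q_measure mult one smult es x + q_measure mult one smult es y)"
proof -
  interpret quantity_space_basis mult one smult es
    using assms unfolding quantity_space_def scalable_monoid_def
    by unfold_locales blast+
  show ?thesis
    using q_measure_mult q_measure_inverse q_measure_smult q_measure_add by blast
qed

end
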